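(* Assume $n>3t+2d$. In any execution of Algorithm 1, if a correct process mbrb-delivers an app-message $m$ from $p_j$ with sequence number $sn$, then at least $\ell=c-d$ correct processes mbrb-deliver $m$ from $p_j$ with sequence number $sn$.
   Context: System model. There are $n$ asynchronous processes $p_1,\dots,p_n$ with distinct known identities. Up to $t$ are Byzantine (arbitrary behavior); the rest are correct; $c$ is the number of correct processes in the execution, $n-t\le c\le n$. The network is fully connected, asynchronous, never corrupts/duplicates/creates messages; "broadcast $M$" sends $M$ to all $n$ processes; a message adversary may suppress, per broadcast by a correct process, up to $d$ ($0\le d<c$) copies addressed to correct processes, all other copies among correct processes being eventually received. Signatures are unforgeable and public keys are known. Algorithm 1 (code for $p_i$). Each process stores, for each triplet $(m,sn,j)$, a set of saved valid signatures of that triplet, at most one per signer. On $\mathrm{mbrb\_broadcast}(m,sn)$: $p_i$ saves its own signature of $(m,sn,i)$ and broadcasts $\mathrm{BUNDLE}(m,sn,i,S)$, $S$ the saved signatures for $(m,sn,i)$. On receiving $\mathrm{BUNDLE}(m,sn,j,sigs)$: if $p_i$ has not already mbrb-delivered some $(-,sn,j)$ and $sigs$ contains a valid signature of $(m,sn,j)$ by $p_j$, then: (1) save all new valid signatures of $(m,sn,j)$ in $sigs$; (2) if $p_i$ has not yet signed any $(-,sn,j)$, save its own signature of $(m,sn,j)$ and broadcast $\mathrm{BUNDLE}(m,sn,j,\text{all saved signatures for }(m,sn,j))$; (3) if strictly more than $\frac{n+t}{2}$ signatures for $(m,sn,j)$ are saved, broadcast $\mathrm{BUNDLE}(m,sn,j,\text{all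 saved signatures})$ and mbrb-deliver $(m,sn,j)$. *)

theory Defs
  imports Main
begin

(* Since signatures are unforgeable
   and public keys are known, a valid signature of a triplet x by process k is
   represented abstractly by the pair (k, x); a bundle carries a set of such pairs
   (pairs whose signer is not a process, or whose triplet is not the bundle's
   triplet, are simply not valid signatures of the bundle's triplet). *)

type_synonym 'm triplet = "'m \<times> nat \<times> nat"
type_synonym 'm sig = "nat \<times> 'm triplet"

datatype 'm msg = BUNDLE 'm nat nat "'m sig set"

(* a copy in transit: (broadcast id, destination, message);
   broadcast id = (global step index, tag) is unique *)
type_synonym 'm copy = "(nat \<times> nat) \<times> nat \<times> 'm msg"

record 'm gstate =
  signed  :: "nat \<Rightarrow> 'm triplet set"
  saved   :: "nat \<Rightarrow> 'm triplet \<Rightarrow> nat set"  (* signers of saved valid signatures *)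
  dlv     :: "nat \<Rightarrow> 'm triplet set"
  transit :: "'m copy set"                       (* copies sent by correct processes,
                                                    addressed to correct processes,
                                                    not suppressed, not yet received *)

definition init_state :: "'m gstate" where
  "init_state = \<lparr> signed = (\<lambda>_. {}), saved = (\<lambda>_ _. {}), dlv = (\<lambda>_. {}), transit = {} \<rparr>"

definition valid_sigs :: "nat \<Rightarrow> 'm triplet \<Rightarrow> 'm sig set \<Rightarrow> nat set" where
  "valid_sigs n x S = {k \<in> {1..n}. (k, x) \<in> S}"

(* broadcast of M by a correct process at step k with tag g; the message adversary
   suppresses the copies addressed to the correct processes in D *)
definition bcast :: "nat set \<Rightarrow> nat \<Rightarrow> nat \<Rightarrow> nat set \<Rightarrow> 'm msg \<Rightarrow> 'm copy set \<Rightarrow> 'm copy set" where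
  "bcast Cor k g D M T = T \<union> {((k, g), q, M) | q. q \<in> Cor - D}"

(* reaction of correct process i to receiving a BUNDLE message at step k;
   D1 / D2 are the sets of suppressed copies for the (up to two) broadcasts *)
definition on_receive ::
  "nat \<Rightarrow> nat \<Rightarrow> nat set \<Rightarrow> nat \<Rightarrow> nat \<Rightarrow> 'm msg \<Rightarrow> nat set \<Rightarrow> nat set
     \<Rightarrow> 'm gstate \<Rightarrow> 'm gstate" where
  "on_receive n t Cor k i M D1 D2 \<sigma> =
     (case M of BUNDLE m sn j sigs \<Rightarrow>
       (let x = (m, sn, j) in
        if (\<forall>m'. (m', sn, j) \<notin> dlv \<sigma> i) \<and> j \<in> {1..n} \<and> (j, x) \<in> sigs then
          (let S1 = saved \<sigma> i x \<union> valid_sigs n x sigs;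
               fresh = (\<forall>m'. (m', sn, j) \<notin> signed \<sigma> i);
               S2 = (if fresh then insert i S1 else S1);
               B = BUNDLE m sn j {(k', x) | k'. k' \<in> S2};
               T1 = (if fresh then bcast Cor k 0 D1 B (transit \<sigma>) else transit \<sigma>);
               dl = (2 * card S2 > n + t);
               T2 = (if dl then bcast Cor k 1 D2 B T1 else T1)
           in \<sigma>\<lparr> signed := (signed \<sigma>)(i := (if fresh then insert x (signed \<sigma> i) else signed \<sigma> i)),
                 saved := (saved \<sigma>)(i := (saved \<sigma> i)(x := S2)),
                 dlv := (dlv \<sigma>)(i := (if dl then insert x (dlv \<sigma> i) else dlv \<sigma> i)),
                 transit := T2 \<rparr>)
        else \<sigma>))"

inductive step :: "nat \<Rightarrow> nat \<Rightarrow> nat \<Rightarrow> nat set \<Rightarrow> nat \<Rightarrow> 'm gstate \<Rightarrow> 'm gstate \<Rightarrow> bool"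
  for n t d Byz where
  stutter: "step n t d Byz k \<sigma> \<sigma>"
| mbrb_broadcast:
    "\<lbrakk> i \<in> {1..n} - Byz;
       \<forall>m'. (m', sn, i) \<notin> signed \<sigma> i;
       D \<subseteq> {1..n} - Byz; card D \<le> d;
       S = insert i (saved \<sigma> i (m, sn, i)) \<rbrakk> \<Longrightarrow>
     step n t d Byz k \<sigma>
       (\<sigma>\<lparr> signed := (signed \<sigma>)(i := insert (m, sn, i) (signed \<sigma> i)),
           saved := (saved \<sigma>)(i := (saved \<sigma> i)((m, sn, i) := S)),
           transit := bcast ({1..n} - Byz) k 0 D
                        (BUNDLE m sn i {(k', (m, sn, i)) | k'. k' \<in> S}) (transit \<sigma>) \<rparr>)"
| receive_correct:
    "\<lbrakk> i \<in> {1..n} - Byz; (bid, i, M) \<in> transit \<sigma>;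
       D1 \<subseteq> {1..n} - Byz; card D1 \<le> d; D2 \<subseteq> {1..n} - Byz; card D2 \<le> d \<rbrakk> \<Longrightarrow>
     step n t d Byz k \<sigma>
       (on_receive n t ({1..n} - Byz) k i M D1 D2 (\<sigma>\<lparr> transit := transit \<sigma> - {(bid, i, M)} \<rparr>))"
| receive_byz:
    "\<lbrakk> Byz \<noteq> {}; i \<in> {1..n} - Byz; M = BUNDLE m sn j sigs;
       \<forall>k' x'. (k', x') \<in> sigs \<and> k' \<in> {1..n} - Byz \<longrightarrow> x' \<in> signed \<sigma> k';
       D1 \<subseteq> {1..n} - Byz; card D1 \<le> d; D2 \<subseteq> {1..n} - Byz; card D2 \<le> d \<rbrakk> \<Longrightarrow>
     step n t d Byz k \<sigma> (on_receive n t ({1..n} - Byz) k i M D1 D2 \<sigma>)"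

(* an (infinite, possibly eventually stuttering) execution: every non-suppressed copy
   between correct processes is eventually received *)
definition execution :: "nat \<Rightarrow> nat \<Rightarrow> nat \<Rightarrow> nat set \<Rightarrow> (nat \<Rightarrow> 'm gstate) \<Rightarrow> bool" where
  "execution n t d Byz s \<longleftrightarrow>
     s 0 = init_state \<and>
     (\<forall>k. step n t d Byz k (s k) (s (Suc k))) \<and>
     (\<forall>k e. e \<in> transit (s k) \<longrightarrow> (\<exists>k'\<ge>k. e \<notin> transit (s k')))"

end

theory Submission
  imports Defs
begin

text \<open>
  Delivering a triplet requires a saved quorum of more than (n+t)/2 signatures of it, and a correct
  process signs at most one triplet per (sn, j). Two quorums share more than t processes, hence a
  correct one, so correct processes never deliver different messages for the same (sn, j).
  A correct process that delivers broadcasts its quorum bundle; the message adversary suppresses at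
  most d of the copies addressed to correct processes, and every other correct process either has
  already delivered for (sn, j) -- necessarily m -- or accepts the bundle, whose signatures alone
  exceed the delivery threshold.
\<close>

definition quorum :: "nat \<Rightarrow> nat \<Rightarrow> nat set \<Rightarrow> bool" where
  "quorum n t S \<longleftrightarrow> S \<subseteq> {1..n} \<and> n + t < 2 * card S"

lemma quorum_finite: "quorum n t S \<Longrightarrow> finite S"
  unfolding quorum_def using finite_subset by blast

lemma quorums_share_correct:
  assumes A: "quorum n t A" and B: "quorum n t B" and Byz: "finite Byz" "card Byz \<le> t"
  obtains k where "k \<in> A" "k \<in> B" "k \<notin> Byz"
proof -
  have "card (A \<union> B) \<le> card {1..n}"
    using A B by (intro card_mono) (auto simp: quorum_def)
  then have "t < card (A \<inter> B)"
    using card_Un_Int[OF quorum_finite[OF A] quorum_finite[OF B]] A B by (simp add: quorum_def)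
  then have "\<not> A \<inter> B \<subseteq> Byz"
    using card_mono[OF Byz(1), of "A \<inter> B"] Byz(2) by linarith
  then show ?thesis using that by blast
qed

lemma nat_first_change:
  assumes "\<not> P k" "P k'" "k \<le> k'"
  obtains k'' where "k \<le> k''" "\<not> P k''" "P (Suc k'')"
proof -
  from \<open>k \<le> k'\<close> \<open>P k'\<close> have "\<exists>k''\<ge>k. \<not> P k'' \<and> P (Suc k'')"
  proof (induction k' rule: dec_induct)
    case (step k')
    show ?case
    proof (cases "P k'")
      case True
      then show ?thesis using step.IH by blast
    next
      case False
      then show ?thesis using step.hyps(1) step.prems by blast
    qed
  qed (use assms(1) in blast)
  then show ?thesis using that by blast
qed

definition bundle_msg :: "'m triplet \<Rightarrow> nat set \<Rightarrow> 'm msg" where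
  "bundle_msg x S = (case x of (m, sn, j) \<Rightarrow> BUNDLE m sn j {(k, x) | k. k \<in> S})"

lemma bundle_msg_eq_BUNDLE_iff:
  "bundle_msg x S = BUNDLE m sn j sigs \<longleftrightarrow> x = (m, sn, j) \<and> sigs = {(k, x) | k. k \<in> S}"
  by (cases x) (auto simp: bundle_msg_def)

lemma valid_sigs_bundle: "S \<subseteq> {1..n} \<Longrightarrow> valid_sigs n x {(k, x) | k. k \<in> S} = S"
  by (auto simp: valid_sigs_def)

lemma valid_sigs_range: "valid_sigs n x sigs \<subseteq> {1..n}"
  by (auto simp: valid_sigs_def)

definition sigs_genuine :: "nat \<Rightarrow> nat set \<Rightarrow> 'm gstate \<Rightarrow> 'm sig set \<Rightarrow> bool" where
  "sigs_genuine n Byz \<sigma> sigs \<longleftrightarrow> (\<forall>k x. (k, x) \<in> sigs \<and> k \<in> {1..n} - Byz \<longrightarrow> x \<in> signed \<sigma> k)"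

lemma sigs_genuine_mono:
  "sigs_genuine n Byz \<sigma> sigs \<Longrightarrow> (\<And>k. signed \<sigma> k \<subseteq> signed \<tau> k) \<Longrightarrow>
   sigs_genuine n Byz \<tau> sigs"
  unfolding sigs_genuine_def by blast

lemma sigs_genuine_valid_sigs:
  "sigs_genuine n Byz \<sigma> sigs \<Longrightarrow> k \<in> valid_sigs n x sigs \<Longrightarrow> k \<notin> Byz \<Longrightarrow> x \<in> signed \<sigma> k"
  unfolding sigs_genuine_def valid_sigs_def by blast

definition mbrb_inv :: "nat \<Rightarrow> nat \<Rightarrow> nat set \<Rightarrow> 'm gstate \<Rightarrow> bool" where
  "mbrb_inv n t Byz \<sigma> \<longleftrightarrow>
     (\<forall>q x. x \<in> dlv \<sigma> q \<longrightarrow> n + t < 2 * card (saved \<sigma> q x)) \<and>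
     (\<forall>q x. saved \<sigma> q x \<subseteq> {1..n}) \<and>
     (\<forall>q x k. k \<in> saved \<sigma> q x \<longrightarrow> k \<notin> Byz \<longrightarrow> x \<in> signed \<sigma> k) \<and>
     (\<forall>k. inj_on snd (signed \<sigma> k)) \<and>  \<comment> \<open>at most one signed message per (sn, j)\<close>
     (\<forall>b q m sn j sigs. (b, q, BUNDLE m sn j sigs) \<in> transit \<sigma> \<longrightarrow> sigs_genuine n Byz \<sigma> sigs)"

lemma mbrb_inv_init: "mbrb_inv n t Byz init_state"
  by (simp add: mbrb_inv_def init_state_def sigs_genuine_def)

lemma mbrb_inv_saved_range: "mbrb_inv n t Byz \<sigma> \<Longrightarrow> saved \<sigma> q x \<subseteq> {1..n}"
  unfolding mbrb_inv_def by blast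

lemma mbrb_inv_delivered_quorum:
  "mbrb_inv n t Byz \<sigma> \<Longrightarrow> x \<in> dlv \<sigma> q \<Longrightarrow> quorum n t (saved \<sigma> q x)"
  unfolding mbrb_inv_def quorum_def by blast

lemma mbrb_inv_saved_signed:
  "mbrb_inv n t Byz \<sigma> \<Longrightarrow> k \<in> saved \<sigma> q x \<Longrightarrow> k \<notin> Byz \<Longrightarrow> x \<in> signed \<sigma> k"
  unfolding mbrb_inv_def by blast

lemma mbrb_inv_signed_inj: "mbrb_inv n t Byz \<sigma> \<Longrightarrow> inj_on snd (signed \<sigma> k)"
  unfolding mbrb_inv_def by blast

lemma mbrb_inv_transit_genuine:
  "mbrb_inv n t Byz \<sigma> \<Longrightarrow> (b, q, BUNDLE m sn j sigs) \<in> transit \<sigma> \<Longrightarrow>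
   sigs_genuine n Byz \<sigma> sigs"
  unfolding mbrb_inv_def by blast

lemma mbrb_inv_drop_copies:
  "mbrb_inv n t Byz \<sigma> \<Longrightarrow> T \<subseteq> transit \<sigma> \<Longrightarrow> mbrb_inv n t Byz (\<sigma>\<lparr>transit := T\<rparr>)"
  unfolding mbrb_inv_def sigs_genuine_def by auto

text \<open>The common shape of the two transitions that change a correct process's state: an
  mbrb-broadcast and the receipt of an accepted bundle.\<close>

definition process_update ::
  "nat \<Rightarrow> 'm triplet \<Rightarrow> bool \<Rightarrow> nat set \<Rightarrow> bool \<Rightarrow> 'm copy set \<Rightarrow> 'm gstate \<Rightarrow> 'm gstate" where
  "process_update i x sign S deliver T \<sigma> =
     \<sigma>\<lparr> signed := (signed \<sigma>)(i := if sign then insert x (signed \<sigma> i) else signed \<sigma> i),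
       saved := (saved \<sigma>)(i := (saved \<sigma> i)(x := S)),
       dlv := (dlv \<sigma>)(i := if deliver then insert x (dlv \<sigma> i) else dlv \<sigma> i),
       transit := T \<rparr>"

lemma process_update_fields:
  "signed (process_update i x sign S deliver T \<sigma>) k =
     (if k = i \<and> sign then insert x (signed \<sigma> k) else signed \<sigma> k)"
  "saved (process_update i x sign S deliver T \<sigma>) q y = (if q = i \<and> y = x then S else saved \<sigma> q y)"
  "dlv (process_update i x sign S deliver T \<sigma>) q =
     (if q = i \<and> deliver then insert x (dlv \<sigma> q) else dlv \<sigma> q)"
  "transit (process_update i x sign S deliver T \<sigma>) = T"
  by (simp_all add: process_update_def)

lemma mbrb_inv_process_update:
  assumes inv: "mbrb_inv n t Byz \<sigma>"
    and sign: "sign \<Longrightarrow> snd x \<notin> snd ` signed \<sigma> i"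
    and S: "saved \<sigma> i x \<subseteq> S" "S \<subseteq> {1..n}"
    and S_signed: "\<And>k. k \<in> S \<Longrightarrow> k \<notin> Byz \<Longrightarrow> x \<in> signed \<sigma> k \<or> (sign \<and> k = i)"
    and deliver: "deliver \<Longrightarrow> n + t < 2 * card S"
    and T: "\<And>b q M. (b, q, M) \<in> T \<Longrightarrow> (b, q, M) \<in> transit \<sigma> \<or> M = bundle_msg x S"
  shows "mbrb_inv n t Byz (process_update i x sign S deliver T \<sigma>)"
    (is "mbrb_inv n t Byz ?\<tau>")
proof -
  note signed_upd = process_update_fields(1)[of i x sign S deliver T \<sigma>]
    and saved_upd = process_update_fields(2)[of i x sign S deliver T \<sigma>]
    and dlv_upd = process_update_fields(3)[of i x sign S deliver T \<sigma>]
    and transit_upd = process_update_fields(4)[of i x sign S deliver T \<sigma>]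
  have signed_mono: "signed \<sigma> k \<subseteq> signed ?\<tau> k" for k
    using signed_upd by auto
  have x_signed: "x \<in> signed ?\<tau> k" if "k \<in> S" "k \<notin> Byz" for k
    using S_signed[OF that] signed_upd by auto
  have delivered: "n + t < 2 * card (saved ?\<tau> q y)" if "y \<in> dlv ?\<tau> q" for q y
  proof (cases "q = i \<and> y = x")
    case True
    have "n + t < 2 * card S"
    proof (cases deliver)
      case False
      then have "quorum n t (saved \<sigma> i x)"
        using that True dlv_upd mbrb_inv_delivered_quorum[OF inv] by simp
      moreover have "card (saved \<sigma> i x) \<le> card S"
        using S by (simp add: card_mono finite_subset)
      ultimately show ?thesis by (simp add: quorum_def)
    qed (rule deliver)
    then show ?thesis using True saved_upd by simp
  next
    case False
    then have "quorum n t (saved \<sigma> q y)"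
      using that dlv_upd mbrb_inv_delivered_quorum[OF inv] by (simp split: if_splits)
    then show ?thesis using False saved_upd by (auto simp: quorum_def)
  qed
  have saved_signed: "y \<in> signed ?\<tau> k" if "k \<in> saved ?\<tau> q y" "k \<notin> Byz" for q y k
  proof (cases "q = i \<and> y = x")
    case True
    then show ?thesis using that x_signed saved_upd by simp
  next
    case False
    then have "k \<in> saved \<sigma> q y"
      using that(1) unfolding saved_upd if_not_P[OF False] by simp
    then have "y \<in> signed \<sigma> k"
      using that(2) by (rule mbrb_inv_saved_signed[OF inv])
    then show ?thesis using signed_mono by blast
  qed
  have signed_inj: "inj_on snd (signed ?\<tau> k)" for k
    using mbrb_inv_signed_inj[OF inv, of k] sign signed_upd by auto
  have transit_genuine: "sigs_genuine n Byz ?\<tau> sigs"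
    if "(b, q, BUNDLE m sn j sigs) \<in> transit ?\<tau>" for b q m sn j sigs
  proof (cases "bundle_msg x S = BUNDLE m sn j sigs")
    case True
    then show ?thesis
      using x_signed by (auto simp: sigs_genuine_def bundle_msg_eq_BUNDLE_iff)
  next
    case False
    then have "(b, q, BUNDLE m sn j sigs) \<in> transit \<sigma>"
      using T[of b q "BUNDLE m sn j sigs"] that False unfolding transit_upd by auto
    then have "sigs_genuine n Byz \<sigma> sigs"
      by (rule mbrb_inv_transit_genuine[OF inv])
    then show ?thesis
      using signed_mono by (rule sigs_genuine_mono)
  qed
  show ?thesis
    unfolding mbrb_inv_def
    using delivered saved_signed signed_inj transit_genuine S mbrb_inv_saved_range[OF inv] saved_upd
    by simp
qed

definition accepts_bundle ::
  "nat \<Rightarrow> 'm gstate \<Rightarrow> nat \<Rightarrow> 'm \<Rightarrow> nat \<Rightarrow> nat \<Rightarrow> 'm sig set \<Rightarrow> bool" where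
  "accepts_bundle n \<sigma> i m sn j sigs \<longleftrightarrow>
     (\<forall>m'. (m', sn, j) \<notin> dlv \<sigma> i) \<and> j \<in> {1..n} \<and> (j, (m, sn, j)) \<in> sigs"

lemma on_receive_reject:
  "\<not> accepts_bundle n \<sigma> i m sn j sigs \<Longrightarrow>
   on_receive n t Cor k i (BUNDLE m sn j sigs) D1 D2 \<sigma> = \<sigma>"
  unfolding on_receive_def accepts_bundle_def Let_def by auto

lemma on_receive_accept:
  assumes "accepts_bundle n \<sigma> i m sn j sigs"
  obtains fresh S dl T where
    "on_receive n t Cor k i (BUNDLE m sn j sigs) D1 D2 \<sigma> = process_update i (m, sn, j) fresh S dl T \<sigma>"
    "fresh \<longleftrightarrow> (\<forall>m'. (m', sn, j) \<notin> signed \<sigma> i)"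
    "S = saved \<sigma> i (m, sn, j) \<union> valid_sigs n (m, sn, j) sigs \<union> (if fresh then {i} else {})"
    "dl \<longleftrightarrow> n + t < 2 * card S"
    "transit \<sigma> \<subseteq> T"
    "\<And>b q M. (b, q, M) \<in> T \<Longrightarrow> (b, q, M) \<in> transit \<sigma> \<or> M = bundle_msg (m, sn, j) S"
    "\<And>q. dl \<Longrightarrow> q \<in> Cor - D2 \<Longrightarrow> ((k, 1), q, bundle_msg (m, sn, j) S) \<in> T"
proof -
  define fresh where "fresh \<longleftrightarrow> (\<forall>m'. (m', sn, j) \<notin> signed \<sigma> i)"
  define S0 where "S0 = saved \<sigma> i (m, sn, j) \<union> valid_sigs n (m, sn, j) sigs"
  define S where "S = (if fresh then insert i S0 else S0)"
  define T1 where
    "T1 = (if fresh then bcast Cor k 0 D1 (bundle_msg (m, sn, j) S) (transit \<sigma>) else transit \<sigma>)"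
  define T where
    "T = (if n + t < 2 * card S then bcast Cor k 1 D2 (bundle_msg (m, sn, j) S) T1 else T1)"
  have "on_receive n t Cor k i (BUNDLE m sn j sigs) D1 D2 \<sigma>
          = process_update i (m, sn, j) fresh S (n + t < 2 * card S) T \<sigma>"
    using assms unfolding accepts_bundle_def on_receive_def process_update_def bundle_msg_def Let_def
      fresh_def S_def S0_def T_def T1_def
    by simp
  moreover have "transit \<sigma> \<subseteq> T"
    by (auto simp: T_def T1_def bcast_def)
  moreover have "(b, q, M) \<in> transit \<sigma> \<or> M = bundle_msg (m, sn, j) S" if "(b, q, M) \<in> T" for b q M
    using that by (auto simp: T_def T1_def bcast_def split: if_splits)
  moreover have "((k, 1), q, bundle_msg (m, sn, j) S) \<in> T"
    if "n + t < 2 * card S" "q \<in> Cor - D2" for q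
    using that by (simp add: T_def bcast_def)
  moreover have "S = S0 \<union> (if fresh then {i} else {})"
    by (auto simp: S_def)
  ultimately show ?thesis
    using that fresh_def S0_def by blast
qed

lemma on_receive_mbrb_inv:
  assumes inv: "mbrb_inv n t Byz \<sigma>" and genuine: "sigs_genuine n Byz \<sigma> sigs" and i: "i \<in> {1..n}"
  shows "mbrb_inv n t Byz (on_receive n t Cor k i (BUNDLE m sn j sigs) D1 D2 \<sigma>)"
proof (cases "accepts_bundle n \<sigma> i m sn j sigs")
  case False
  then show ?thesis using inv by (simp add: on_receive_reject)
next
  case True
  obtain fresh S dl T
    where eq: "on_receive n t Cor k i (BUNDLE m sn j sigs) D1 D2 \<sigma>
                 = process_update i (m, sn, j) fresh S dl T \<sigma>"
    and fresh: "fresh \<longleftrightarrow> (\<forall>m'. (m', sn, j) \<notin> signed \<sigma> i)"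
    and S: "S = saved \<sigma> i (m, sn, j) \<union> valid_sigs n (m, sn, j) sigs \<union> (if fresh then {i} else {})"
    and dl: "dl \<longleftrightarrow> n + t < 2 * card S"
    and T: "\<And>b q M. (b, q, M) \<in> T \<Longrightarrow> (b, q, M) \<in> transit \<sigma> \<or> M = bundle_msg (m, sn, j) S"
    by (rule on_receive_accept[OF True]) blast
  show ?thesis
    unfolding eq
  proof (rule mbrb_inv_process_update[OF inv])
    show "snd (m, sn, j) \<notin> snd ` signed \<sigma> i" if fresh
      using that fresh by force
    show "saved \<sigma> i (m, sn, j) \<subseteq> S"
      using S by blast
    show "S \<subseteq> {1..n}"
      using S i mbrb_inv_saved_range[OF inv, of i "(m, sn, j)"] valid_sigs_range[of n "(m, sn, j)" sigs]
      by auto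
    show "(m, sn, j) \<in> signed \<sigma> k' \<or> fresh \<and> k' = i" if "k' \<in> S" "k' \<notin> Byz" for k'
      using that S mbrb_inv_saved_signed[OF inv] sigs_genuine_valid_sigs[OF genuine]
      by (auto split: if_splits)
  qed (use dl T in auto)
qed

lemma on_receive_dlv_mono: "dlv \<sigma> q \<subseteq> dlv (on_receive n t Cor k i M D1 D2 \<sigma>) q"
proof (cases M)
  case (BUNDLE m sn j sigs)
  show ?thesis
  proof (cases "accepts_bundle n \<sigma> i m sn j sigs")
    case True
    then obtain fresh S dl T
      where "on_receive n t Cor k i M D1 D2 \<sigma> = process_update i (m, sn, j) fresh S dl T \<sigma>"
      unfolding BUNDLE by (rule on_receive_accept) blast
    then show ?thesis by (auto simp: process_update_def)
  qed (simp add: BUNDLE on_receive_reject)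
qed

lemma on_receive_transit_mono: "transit \<sigma> \<subseteq> transit (on_receive n t Cor k i M D1 D2 \<sigma>)"
proof (cases M)
  case (BUNDLE m sn j sigs)
  show ?thesis
  proof (cases "accepts_bundle n \<sigma> i m sn j sigs")
    case True
    then obtain fresh S dl T
      where "on_receive n t Cor k i M D1 D2 \<sigma> = process_update i (m, sn, j) fresh S dl T \<sigma>"
        and "transit \<sigma> \<subseteq> T"
      unfolding BUNDLE by (rule on_receive_accept) blast
    then show ?thesis by (simp add: process_update_def)
  qed (simp add: BUNDLE on_receive_reject)
qed

lemma on_receive_new_delivery:
  assumes inv: "mbrb_inv n t Byz \<sigma>" and i: "i \<in> {1..n}"
    and before: "(m, sn, j) \<notin> dlv \<sigma> q"
    and after: "(m, sn, j) \<in> dlv (on_receive n t Cor k i M D1 D2 \<sigma>) q"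
  obtains S where "j \<in> S" "quorum n t S"
    "\<And>q'. q' \<in> Cor - D2 \<Longrightarrow>
       ((k, 1), q', bundle_msg (m, sn, j) S) \<in> transit (on_receive n t Cor k i M D1 D2 \<sigma>)"
proof -
  obtain m0 sn0 j0 sigs where M: "M = BUNDLE m0 sn0 j0 sigs"
    by (cases M)
  have guard: "accepts_bundle n \<sigma> i m0 sn0 j0 sigs"
  proof (rule ccontr)
    assume "\<not> ?thesis"
    then show False
      using before after by (simp add: M on_receive_reject)
  qed
  obtain fresh S dl T
    where eq: "on_receive n t Cor k i M D1 D2 \<sigma> = process_update i (m0, sn0, j0) fresh S dl T \<sigma>"
    and S: "S = saved \<sigma> i (m0, sn0, j0) \<union> valid_sigs n (m0, sn0, j0) sigs \<union> (if fresh then {i} else {})"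
    and dl: "dl \<longleftrightarrow> n + t < 2 * card S"
    and sent: "\<And>q'. dl \<Longrightarrow> q' \<in> Cor - D2 \<Longrightarrow> ((k, 1), q', bundle_msg (m0, sn0, j0) S) \<in> T"
    unfolding M by (rule on_receive_accept[OF guard]) blast
  have new: "q = i" "dl" "(m, sn, j) = (m0, sn0, j0)"
    using before after by (auto simp: eq process_update_def split: if_splits)
  show ?thesis
  proof (rule that)
    show "j \<in> S"
      using guard new(3) S by (auto simp: accepts_bundle_def valid_sigs_def)
    show "quorum n t S"
      using S i dl new(2) mbrb_inv_saved_range[OF inv, of i "(m0, sn0, j0)"]
        valid_sigs_range[of n "(m0, sn0, j0)" sigs]
      by (auto simp: quorum_def)
  qed (use sent new in \<open>simp add: eq process_update_def\<close>)
qed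

lemma on_receive_quorum_bundle:
  assumes inv: "mbrb_inv n t Byz \<sigma>" and "j \<in> S" and S: "quorum n t S"
  shows "\<exists>m'. (m', sn, j) \<in> dlv (on_receive n t Cor k q (bundle_msg (m, sn, j) S) D1 D2 \<sigma>) q"
proof (cases "\<exists>m'. (m', sn, j) \<in> dlv \<sigma> q")
  case True
  then show ?thesis using on_receive_dlv_mono by blast
next
  case False
  let ?sigs = "{(k', (m, sn, j)) | k'. k' \<in> S}"
  have msg: "bundle_msg (m, sn, j) S = BUNDLE m sn j ?sigs"
    by (simp add: bundle_msg_def)
  have guard: "accepts_bundle n \<sigma> q m sn j ?sigs"
    using False \<open>j \<in> S\<close> S by (auto simp: accepts_bundle_def quorum_def)
  obtain fresh S' dl T
    where eq: "on_receive n t Cor k q (BUNDLE m sn j ?sigs) D1 D2 \<sigma>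
                 = process_update q (m, sn, j) fresh S' dl T \<sigma>"
    and S': "S' = saved \<sigma> q (m, sn, j) \<union> valid_sigs n (m, sn, j) ?sigs \<union> (if fresh then {q} else {})"
    and dl: "dl \<longleftrightarrow> n + t < 2 * card S'"
    by (rule on_receive_accept[OF guard]) blast
  have "S \<subseteq> S'"
    using S' S valid_sigs_bundle[of S n "(m, sn, j)"] by (auto simp: quorum_def)
  moreover have "finite S'"
    using S' mbrb_inv_saved_range[OF inv, of q "(m, sn, j)"] valid_sigs_range[of n "(m, sn, j)" ?sigs]
    by (auto intro: finite_subset)
  ultimately have dl
    using dl S card_mono[of S' S] by (auto simp: quorum_def)
  then show ?thesis
    unfolding msg eq by (auto simp: process_update_def)
qed

lemma step_mbrb_inv:
  assumes "step n t d Byz k \<sigma> \<sigma>'" and inv: "mbrb_inv n t Byz \<sigma>"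
  shows "mbrb_inv n t Byz \<sigma>'"
  using assms(1)
proof cases
  case stutter
  then show ?thesis using inv by simp
next
  case (mbrb_broadcast i sn D S m)
  let ?x = "(m, sn, i)"
  have "\<sigma>' =
      process_update i ?x True S False (bcast ({1..n} - Byz) k 0 D (bundle_msg ?x S) (transit \<sigma>)) \<sigma>"
    using mbrb_broadcast(1) by (simp add: process_update_def bundle_msg_def)
  also have "mbrb_inv n t Byz \<dots>"
  proof (rule mbrb_inv_process_update[OF inv])
    show "snd ?x \<notin> snd ` signed \<sigma> i"
      using mbrb_broadcast(3) by force
    show "saved \<sigma> i ?x \<subseteq> S" "S \<subseteq> {1..n}"
      using mbrb_broadcast(2,6) mbrb_inv_saved_range[OF inv, of i ?x] by auto
    show "?x \<in> signed \<sigma> k' \<or> True \<and> k' = i" if "k' \<in> S" "k' \<notin> Byz" for k'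
      using that mbrb_broadcast(6) mbrb_inv_saved_signed[OF inv] by auto
  qed (auto simp: bcast_def)
  finally show ?thesis .
next
  case (receive_correct i bid M D1 D2)
  obtain m sn j sigs where M: "M = BUNDLE m sn j sigs"
    by (cases M)
  let ?\<sigma>0 = "\<sigma>\<lparr>transit := transit \<sigma> - {(bid, i, M)}\<rparr>"
  have "mbrb_inv n t Byz ?\<sigma>0"
    using inv by (rule mbrb_inv_drop_copies) auto
  moreover have "sigs_genuine n Byz ?\<sigma>0 sigs"
    using mbrb_inv_transit_genuine[OF inv] receive_correct(3) by (simp add: M sigs_genuine_def)
  ultimately have "mbrb_inv n t Byz (on_receive n t ({1..n} - Byz) k i M D1 D2 ?\<sigma>0)"
    unfolding M by (rule on_receive_mbrb_inv) (use receive_correct(2) in simp)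
  then show ?thesis
    using receive_correct(1) by simp
next
  case (receive_byz i m sn j sigs D1 D2)
  then show ?thesis
    using on_receive_mbrb_inv[OF inv] by (simp add: sigs_genuine_def)
qed

lemma step_dlv_mono:
  assumes "step n t d Byz k \<sigma> \<sigma>'"
  shows "dlv \<sigma> q \<subseteq> dlv \<sigma>' q"
  using assms
proof cases
  case (receive_correct i bid M D1 D2)
  then show ?thesis
    using on_receive_dlv_mono[of "\<sigma>\<lparr>transit := transit \<sigma> - {(bid, i, M)}\<rparr>" q] by simp
next
  case receive_byz
  then show ?thesis
    using on_receive_dlv_mono[of \<sigma> q] by simp
qed simp_all

lemma step_new_delivery:
  assumes "step n t d Byz k \<sigma> \<sigma>'" and inv: "mbrb_inv n t Byz \<sigma>"
    and before: "(m, sn, j) \<notin> dlv \<sigma> q" and after: "(m, sn, j) \<in> dlv \<sigma>' q"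
  obtains D S where "D \<subseteq> {1..n} - Byz" "card D \<le> d" "j \<in> S" "quorum n t S"
    "\<And>q'. q' \<in> {1..n} - Byz - D \<Longrightarrow> ((k, 1), q', bundle_msg (m, sn, j) S) \<in> transit \<sigma>'"
  using assms(1)
proof cases
  case stutter
  then show ?thesis using before after by simp
next
  case mbrb_broadcast
  then show ?thesis using before after by simp
next
  case (receive_correct i bid M D1 D2)
  let ?\<sigma>0 = "\<sigma>\<lparr>transit := transit \<sigma> - {(bid, i, M)}\<rparr>"
  have "mbrb_inv n t Byz ?\<sigma>0"
    using inv by (rule mbrb_inv_drop_copies) auto
  moreover have "i \<in> {1..n}"
    using receive_correct(2) by simp
  moreover have "(m, sn, j) \<notin> dlv ?\<sigma>0 q"
    using before by simp
  moreover have "(m, sn, j) \<in> dlv (on_receive n t ({1..n} - Byz) k i M D1 D2 ?\<sigma>0) q"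
    using after receive_correct(1) by simp
  ultimately obtain S where "j \<in> S" "quorum n t S"
    "\<And>q'. q' \<in> {1..n} - Byz - D2 \<Longrightarrow>
       ((k, 1), q', bundle_msg (m, sn, j) S) \<in> transit (on_receive n t ({1..n} - Byz) k i M D1 D2 ?\<sigma>0)"
    by (rule on_receive_new_delivery) blast
  then show ?thesis
    by (intro that[of D2 S]) (use receive_correct in auto)
next
  case (receive_byz i M' m' sn' j' sigs D1 D2)
  have i: "i \<in> {1..n}"
    using receive_byz(3) by simp
  have received: "(m, sn, j) \<in> dlv (on_receive n t ({1..n} - Byz) k i M' D1 D2 \<sigma>) q"
    using after receive_byz(1) by simp
  obtain S where "j \<in> S" "quorum n t S"
    "\<And>q'. q' \<in> {1..n} - Byz - D2 \<Longrightarrow>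
       ((k, 1), q', bundle_msg (m, sn, j) S) \<in> transit (on_receive n t ({1..n} - Byz) k i M' D1 D2 \<sigma>)"
    using inv i before received by (rule on_receive_new_delivery) blast
  then show ?thesis
    by (intro that[of D2 S]) (use receive_byz in auto)
qed

lemma step_receive_quorum_bundle:
  assumes "step n t d Byz k \<sigma> \<sigma>'" and inv: "mbrb_inv n t Byz \<sigma>"
    and pending: "(b, q, bundle_msg (m, sn, j) S) \<in> transit \<sigma>"
    and received: "(b, q, bundle_msg (m, sn, j) S) \<notin> transit \<sigma>'"
    and "j \<in> S" "quorum n t S"
  shows "\<exists>m'. (m', sn, j) \<in> dlv \<sigma>' q"
  using assms(1)
proof cases
  case stutter
  then show ?thesis using pending received by simp
next
  case mbrb_broadcast
  then show ?thesis using pending received by (simp add: bcast_def)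
next
  case receive_byz
  then show ?thesis using pending received on_receive_transit_mono by blast
next
  case (receive_correct i bid M D1 D2)
  let ?\<sigma>0 = "\<sigma>\<lparr>transit := transit \<sigma> - {(bid, i, M)}\<rparr>"
  have copy: "(bid, i, M) = (b, q, bundle_msg (m, sn, j) S)"
  proof (rule ccontr)
    assume "(bid, i, M) \<noteq> (b, q, bundle_msg (m, sn, j) S)"
    then have "(b, q, bundle_msg (m, sn, j) S) \<in> transit ?\<sigma>0"
      using pending by auto
    then show False
      using received on_receive_transit_mono[of ?\<sigma>0] unfolding receive_correct(1) by blast
  qed
  have "mbrb_inv n t Byz ?\<sigma>0"
    using inv by (rule mbrb_inv_drop_copies) auto
  then show ?thesis
    using on_receive_quorum_bundle \<open>j \<in> S\<close> \<open>quorum n t S\<close> copy unfolding receive_correct(1)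
    by auto
qed

lemma execution_mbrb_inv:
  assumes "execution n t d Byz s"
  shows "mbrb_inv n t Byz (s k)"
proof (induction k)
  case 0
  then show ?case using assms mbrb_inv_init by (simp add: execution_def)
next
  case (Suc k)
  then show ?case using assms step_mbrb_inv unfolding execution_def by blast
qed

lemma execution_dlv_mono:
  assumes "execution n t d Byz s" and "k \<le> k'"
  shows "dlv (s k) q \<subseteq> dlv (s k') q"
  using lift_Suc_mono_le[of "\<lambda>k. dlv (s k) q", OF _ assms(2)] step_dlv_mono assms(1)
  unfolding execution_def by blast

lemma execution_copy_received:
  assumes "execution n t d Byz s" and "e \<in> transit (s k)"
  obtains k' where "e \<in> transit (s k')" "e \<notin> transit (s (Suc k'))"
proof -
  obtain k'' where "k \<le> k''" "e \<notin> transit (s k'')"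
    using assms unfolding execution_def by blast
  then show ?thesis
    using nat_first_change[of "\<lambda>k. e \<notin> transit (s k)" k k''] assms(2) that by blast
qed

lemma execution_agreement:
  assumes exec: "execution n t d Byz s" and "finite Byz" "card Byz \<le> t"
    and "(m1, sn, j) \<in> dlv (s k1) q1" "(m2, sn, j) \<in> dlv (s k2) q2"
  shows "m1 = m2"
proof -
  define \<sigma> where "\<sigma> = s (max k1 k2)"
  have inv: "mbrb_inv n t Byz \<sigma>"
    unfolding \<sigma>_def using exec by (rule execution_mbrb_inv)
  have "(m1, sn, j) \<in> dlv \<sigma> q1" "(m2, sn, j) \<in> dlv \<sigma> q2"
    using execution_dlv_mono[OF exec] assms(4,5) unfolding \<sigma>_def
    by (meson max.cobounded1 max.cobounded2 subsetD)+
  then obtain k where "k \<in> saved \<sigma> q1 (m1, sn, j)" "k \<in> saved \<sigma> q2 (m2, sn, j)" "k \<notin> Byz"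
    using quorums_share_correct mbrb_inv_delivered_quorum[OF inv] assms(2,3) by metis
  then have "(m1, sn, j) \<in> signed \<sigma> k" "(m2, sn, j) \<in> signed \<sigma> k"
    using mbrb_inv_saved_signed[OF inv] by blast+
  then show ?thesis
    using inj_onD[OF mbrb_inv_signed_inj[OF inv]] by force
qed

lemma execution_delivery_sends_quorum_bundle:
  assumes exec: "execution n t d Byz s" and "(m, sn, j) \<in> dlv (s k) i"
  obtains k0 D S where "D \<subseteq> {1..n} - Byz" "card D \<le> d" "j \<in> S" "quorum n t S"
    "\<And>q. q \<in> {1..n} - Byz - D \<Longrightarrow> ((k0, 1), q, bundle_msg (m, sn, j) S) \<in> transit (s (Suc k0))"
proof -
  have step: "\<And>k. step n t d Byz k (s k) (s (Suc k))"
    using exec by (simp add: execution_def)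
  obtain k0 where "(m, sn, j) \<notin> dlv (s k0) i" "(m, sn, j) \<in> dlv (s (Suc k0)) i"
    using nat_first_change[of "\<lambda>k. (m, sn, j) \<in> dlv (s k) i" 0 k] assms
    by (auto simp: execution_def init_state_def)
  then obtain D S where "D \<subseteq> {1..n} - Byz" "card D \<le> d" "j \<in> S" "quorum n t S"
    "\<And>q. q \<in> {1..n} - Byz - D \<Longrightarrow> ((k0, 1), q, bundle_msg (m, sn, j) S) \<in> transit (s (Suc k0))"
    by (rule step_new_delivery[OF step execution_mbrb_inv[OF exec]]) blast
  then show ?thesis
    using that by blast
qed

lemma execution_quorum_bundle_delivered:
  assumes exec: "execution n t d Byz s" and "finite Byz" "card Byz \<le> t"
    and pending: "(b, q, bundle_msg (m, sn, j) S) \<in> transit (s k)" and "j \<in> S" "quorum n t S"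
    and delivered: "(m, sn, j) \<in> dlv (s k1) p"
  obtains k' where "(m, sn, j) \<in> dlv (s k') q"
proof -
  obtain k' where "(b, q, bundle_msg (m, sn, j) S) \<in> transit (s k')"
    "(b, q, bundle_msg (m, sn, j) S) \<notin> transit (s (Suc k'))"
    using exec pending by (rule execution_copy_received)
  moreover have "step n t d Byz k' (s k') (s (Suc k'))"
    using exec by (simp add: execution_def)
  ultimately obtain m' where m': "(m', sn, j) \<in> dlv (s (Suc k')) q"
    using step_receive_quorum_bundle[OF _ execution_mbrb_inv[OF exec] _ _ \<open>j \<in> S\<close> \<open>quorum n t S\<close>]
    by blast
  moreover have "m' = m"
    using execution_agreement[OF exec assms(2,3) m' delivered] .
  ultimately show ?thesis
    using that by blast
qed

theorem mainTheorem6: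
  fixes n t d :: nat and Byz :: "nat set" and s :: "nat \<Rightarrow> 'm gstate"
    and m :: 'm and sn j i k :: nat
  assumes "Byz \<subseteq> {1..n}" and "card Byz \<le> t"
    and "d < n - card Byz"
    and "n > 3 * t + 2 * d"
    and "execution n t d Byz s"
    and "i \<in> {1..n} - Byz" and "(m, sn, j) \<in> dlv (s k) i"
  shows "card {q \<in> {1..n} - Byz. \<exists>k'. (m, sn, j) \<in> dlv (s k') q} \<ge> (n - card Byz) - d"
proof -
  let ?delivered = "{q \<in> {1..n} - Byz. \<exists>k'. (m, sn, j) \<in> dlv (s k') q}"
  have fin: "finite Byz"
    using assms(1) finite_subset by blast
  obtain k0 D S where D: "D \<subseteq> {1..n} - Byz" "card D \<le> d" and S: "j \<in> S" "quorum n t S"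
    and sent: "\<And>q. q \<in> {1..n} - Byz - D \<Longrightarrow>
                 ((k0, 1), q, bundle_msg (m, sn, j) S) \<in> transit (s (Suc k0))"
    using assms(5,7) by (rule execution_delivery_sends_quorum_bundle) blast
  have "{1..n} - Byz - D \<subseteq> ?delivered"
  proof
    fix q assume q: "q \<in> {1..n} - Byz - D"
    obtain k' where "(m, sn, j) \<in> dlv (s k') q"
      using assms(5) fin assms(2) sent[OF q] S assms(7) by (rule execution_quorum_bundle_delivered)
    then show "q \<in> ?delivered"
      using q by blast
  qed
  then have "card ({1..n} - Byz - D) \<le> card ?delivered"
    by (intro card_mono) auto
  moreover have "card ({1..n} - Byz - D) = (n - card Byz) - card D"
    using D(1) assms(1) fin by (simp add: card_Diff_subset finite_subset)
  ultimately show ?thesis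
    using D(2) by linarith
qed

end
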